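(* For any hypothesis class $\mathcal{H}\subseteq\{0,1\}^{\mathcal{X}}$, as a function of the time horizon $T$, $$\inf_{\mathcal{A}}\operatorname{M}_{\mathcal{A}}(T,\mathcal{H}) = \begin{cases}\Theta(1), & \text{if } \operatorname{W}(\mathcal{H})=1,\\ \Theta(\sqrt{T}), & \text{if } 2\le \operatorname{W}(\mathcal{H})<\infty,\\ \Theta(T), & \text{if } \operatorname{W}(\mathcal{H})=\infty,\end{cases}$$ where the infimum is over all (possibly randomized) online learners operating under apple tasting feedback.
   Context: Online binary classification: over rounds $t=1,\dots,T$, an adversary picks $(x_t,y_t)\in\mathcal{X}\times\{0,1\}$ and reveals $x_t$; the learner $\mathcal{A}$ (possibly randomized) outputs $\hat y_t=\mathcal{A}(x_t)\in\{0,1\}$ based on the history; under apple tasting feedback the learner observes $y_t$ only if $\hat y_t=1$. $\operatorname{M}_{\mathcal{A}}(T,\mathcal{H}) := \sup_{h\in\mathcal{H}}\sup_{x_1,\dots,x_T}\mathbb{E}\bigl[\sum_{t=1}^T \mathbb{1}\{\mathcal{A}(x_t)\neq h(x_t)\}\bigr]$ (labels $y_t=h(x_t)$, expectation over the learner's randomness). AL tree of width $w\in\mathbb{N}=\{1,2,\dots\}$ and depth $d$: a binary string $u$ is an internal node if $|u|<d$ and $u$ has fewer than $w$ ones; the tree assigns $x_u\in\mathcal{X}$ to each internal node. A path is a binary string $\sigma$ whose proper prefixes are all internal nodes but which is not itself one. The tree is shattered by $\mathcal{H}$ if for every path $\sigma$ some $h\in\mathcal{H}$ satisfies $h(x_{(\sigma_1,\dots,\sigma_{i-1})})=\sigma_i$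 for all $i\le|\sigma|$. $\operatorname{AL}_w(\mathcal{H})$ is the largest $d$ such that such a tree of width $w$ and depth $d$ is shattered ($\infty$ if unbounded, $0$ if none). The Effective width $\operatorname{W}(\mathcal{H})$ is the smallest $w\in\mathbb{N}$ with $\operatorname{AL}_w(\mathcal{H})<\infty$, and $\infty$ if none exists. *)

theory Defs
  imports Complex_Main "HOL-Library.Extended_Nat" "HOL-Library.Landau_Symbols"
begin

text \<open>Labels are encoded as bool (True = 1, False = 0).  A history entry records
  the revealed instance, the learner's prediction, and the feedback it received:
  Some y if the prediction was 1 (True), None otherwise.\<close>

type_synonym 'x hist = "('x \<times> bool \<times> bool option) list"

text \<open>A (possibly randomized) learner in behavioural form: given the history and the
  current instance, the probability with which it predicts 1.\<close>

type_synonym 'x learner = "'x hist \<Rightarrow> 'x \<Rightarrow> real"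

definition valid_learner :: "'x learner \<Rightarrow> bool" where
  "valid_learner A \<longleftrightarrow> (\<forall>hs x. 0 \<le> A hs x \<and> A hs x \<le> 1)"

fun exp_mistakes :: "'x learner \<Rightarrow> ('x \<Rightarrow> bool) \<Rightarrow> 'x hist \<Rightarrow> 'x list \<Rightarrow> real" where
  "exp_mistakes A h hs [] = 0"
| "exp_mistakes A h hs (x # xs) =
     A hs x * ((if h x then 0 else 1) + exp_mistakes A h (hs @ [(x, True, Some (h x))]) xs)
   + (1 - A hs x) * ((if h x then 1 else 0) + exp_mistakes A h (hs @ [(x, False, None)]) xs)"

definition mistake_bound :: "'x learner \<Rightarrow> nat \<Rightarrow> ('x \<Rightarrow> bool) set \<Rightarrow> real" where
  "mistake_bound A T H = (SUP p \<in> {(h, xs). h \<in> H \<and> length xs = T}. exp_mistakes A (fst p) [] (snd p))"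

definition opt_mistakes :: "nat \<Rightarrow> ('x \<Rightarrow> bool) set \<Rightarrow> real" where
  "opt_mistakes T H = (INF A \<in> {A. valid_learner A}. mistake_bound A T H)"

definition internal_node :: "nat \<Rightarrow> nat \<Rightarrow> bool list \<Rightarrow> bool" where
  "internal_node w d u \<longleftrightarrow> length u < d \<and> length (filter id u) < w"

definition is_path :: "nat \<Rightarrow> nat \<Rightarrow> bool list \<Rightarrow> bool" where
  "is_path w d \<sigma> \<longleftrightarrow> (\<forall>i < length \<sigma>. internal_node w d (take i \<sigma>)) \<and> \<not> internal_node w d \<sigma>"

definition AL_shattered :: "('x \<Rightarrow> bool) set \<Rightarrow> nat \<Rightarrow> nat \<Rightarrow> (bool list \<Rightarrow> 'x) \<Rightarrow> bool" where
  "AL_shattered H w d X \<longleftrightarrow>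
     (\<forall>\<sigma>. is_path w d \<sigma> \<longrightarrow> (\<exists>h\<in>H. \<forall>i < length \<sigma>. h (X (take i \<sigma>)) = \<sigma> ! i))"

definition AL_dim :: "nat \<Rightarrow> ('x \<Rightarrow> bool) set \<Rightarrow> enat" where
  "AL_dim w H = Sup {enat d | d. \<exists>X. AL_shattered H w d X}"

definition eff_width :: "('x \<Rightarrow> bool) set \<Rightarrow> enat" where
  "eff_width H = Inf {enat w | w. 1 \<le> w \<and> AL_dim w H < \<infinity>}"

end

theory Submission
  imports Defs
begin

text \<open>
  Suppose the width-w dimension d of H is finite. The learner keeps the version
  space V and a width budget u, initially w. On an instance x it predicts 1 for sure if labelling
  x by 0 would lower the width-u dimension of V, so that every mistake it makes there lowers the
  dimension. Otherwise it predicts 1 with probability p; in that case the hypotheses labelling x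
  by 1 have smaller width-(u - 1) dimension (two shattered trees would join below x), so when
  the label 1 is revealed the learner keeps only them and lowers the budget. The potential
  (u - 1)/p + dim + p (rounds left) dominates the expected number of mistakes, which is thus at
  most (w - 1)/p + d + p T: O(1) for w = 1 and p = 1/(T + 1), O(sqrt T) for p = 1/sqrt T.

  If every width has infinite dimension, a width-(T + 1) tree of depth T is a
  complete binary tree, and averaging over its branches forces T/2 mistakes. If only the width-1
  dimension is infinite, width-1 trees are chains of d instances with d + 1 targets; presenting
  each instance d times, for d = floor (sqrt T), forces d/2 mistakes on some target.
\<close>

lemma valid_learnerD: "valid_learner A \<Longrightarrow> 0 \<le> A hs x \<and> A hs x \<le> 1"
  by (simp add: valid_learner_def)

lemma convex_bound_ge:
  fixes a X Y Z :: real
  assumes "0 \<le> a" "a \<le> 1" "Z \<le> X" "Z \<le> Y"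
  shows "Z \<le> a * X + (1 - a) * Y"
  using convex_bound_le[of "-X" "-Z" "-Y" a "1 - a"] assms by simp

lemma exp_mistakes_nonneg:
  assumes "valid_learner A"
  shows "0 \<le> exp_mistakes A h hs xs"
proof (induction xs arbitrary: hs)
  case (Cons x xs)
  show ?case
    using convex_bound_ge[of "A hs x" 0] valid_learnerD[OF assms] Cons.IH
    by (simp add: add_nonneg_nonneg)
qed simp

lemma exp_mistakes_le_length:
  assumes "valid_learner A"
  shows "exp_mistakes A h hs xs \<le> length xs"
proof (induction xs arbitrary: hs)
  case (Cons x xs)
  show ?case
    using convex_bound_le[of _ "1 + real (length xs)" _ "A hs x" "1 - A hs x"]
      valid_learnerD[OF assms] Cons.IH
    by (simp add: add_mono)
qed simp

lemma exp_mistakes_append_mono: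
  assumes "valid_learner A"
  shows "exp_mistakes A h hs xs \<le> exp_mistakes A h hs (xs @ ys)"
proof (induction xs arbitrary: hs)
  case Nil
  show ?case using exp_mistakes_nonneg[OF assms] by simp
next
  case (Cons x xs)
  show ?case
    using valid_learnerD[OF assms, of hs x] Cons.IH
    by (simp add: add_mono mult_left_mono)
qed

lemma exp_mistakes_le_mistake_bound:
  assumes "valid_learner A" "h \<in> H" "length xs = T"
  shows "exp_mistakes A h [] xs \<le> mistake_bound A T H"
  unfolding mistake_bound_def
proof (rule cSUP_upper2[where x = "(h, xs)"])
  show "bdd_above ((\<lambda>p. exp_mistakes A (fst p) [] (snd p)) ` {(h, xs). h \<in> H \<and> length xs = T})"
    using exp_mistakes_le_length[OF assms(1)] by (intro bdd_aboveI[where M = "real T"]) auto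
qed (use assms in auto)

lemma mistake_bound_le:
  assumes "H \<noteq> {}" "\<And>h xs. h \<in> H \<Longrightarrow> length xs = T \<Longrightarrow> exp_mistakes A h [] xs \<le> B"
  shows "mistake_bound A T H \<le> B"
  unfolding mistake_bound_def
proof (rule cSUP_least)
  obtain h where "h \<in> H" using assms(1) by blast
  then have "(h, replicate T undefined) \<in> {(h, xs). h \<in> H \<and> length xs = T}" by simp
  then show "{(h, xs). h \<in> H \<and> length xs = T} \<noteq> {}" by blast
qed (use assms(2) in auto)

lemma mistake_bound_nonneg:
  assumes "valid_learner A" "H \<noteq> {}"
  shows "0 \<le> mistake_bound A T H"
proof -
  obtain h where "h \<in> H" using assms(2) by blast
  then show ?thesis
    using exp_mistakes_le_mistake_bound[OF assms(1), of h H "replicate T undefined" T]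
      exp_mistakes_nonneg[OF assms(1)] by (meson length_replicate order_trans)
qed

lemma valid_learner_const_0: "valid_learner (\<lambda>_ _. 0)"
  by (simp add: valid_learner_def)

lemma opt_mistakes_le_mistake_bound:
  assumes "valid_learner A" "H \<noteq> {}"
  shows "opt_mistakes T H \<le> mistake_bound A T H"
  unfolding opt_mistakes_def
  by (rule cINF_lower) (use assms mistake_bound_nonneg in \<open>auto intro!: bdd_belowI[where m = 0]\<close>)

lemma le_opt_mistakes:
  assumes "\<And>A. valid_learner A \<Longrightarrow> B \<le> mistake_bound A T H"
  shows "B \<le> opt_mistakes T H"
  unfolding opt_mistakes_def
  by (rule cINF_greatest) (use assms valid_learner_const_0 in auto)

lemma opt_mistakes_nonneg: "H \<noteq> {} \<Longrightarrow> 0 \<le> opt_mistakes T H"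
  by (rule le_opt_mistakes) (rule mistake_bound_nonneg)

lemma opt_mistakes_le_horizon:
  assumes "H \<noteq> {}"
  shows "opt_mistakes T H \<le> real T"
proof -
  have "mistake_bound (\<lambda>_ _. 0) T H \<le> real T"
    by (rule mistake_bound_le[OF assms]) (use exp_mistakes_le_length[OF valid_learner_const_0] in auto)
  then show ?thesis
    by (rule order_trans[OF opt_mistakes_le_mistake_bound[OF valid_learner_const_0 assms]])
qed

text \<open>For the empty class the supremum in \<^const>\<open>mistake_bound\<close> is the junk value
  \<^term>\<open>Sup {} :: real\<close>, which does not depend on the horizon.\<close>

lemma opt_mistakes_empty:
  "opt_mistakes T ({} :: ('x \<Rightarrow> bool) set) = opt_mistakes 0 ({} :: ('x \<Rightarrow> bool) set)"
  by (simp add: opt_mistakes_def mistake_bound_def)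

section \<open>Shattered AL trees\<close>

lemma is_path_length_le:
  assumes "is_path w d \<sigma>"
  shows "length \<sigma> \<le> d"
proof (cases \<sigma> rule: rev_cases)
  case (snoc ys y)
  then have "internal_node w d (take (length ys) \<sigma>)"
    using assms unfolding is_path_def by auto
  then show ?thesis using snoc by (simp add: internal_node_def)
qed simp

lemma length_filter_take_le: "length (filter P (take i xs)) \<le> length (filter P xs)"
  by (metis append_take_drop_id filter_append length_append le_add1)

lemma AL_shattered_class_mono: "AL_shattered V w d X \<Longrightarrow> V \<subseteq> V' \<Longrightarrow> AL_shattered V' w d X"
  unfolding AL_shattered_def by blast

text \<open>A path of the shallower tree either is a path of the deeper one or, if it ends for
  lack of depth, extends to one by zeros.\<close>

lemma AL_shattered_depth_mono:
  assumes shattered: "AL_shattered H w d X" and "d' \<le> d"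
  shows "AL_shattered H w d' X"
  unfolding AL_shattered_def
proof (intro allI impI)
  fix \<sigma> assume path: "is_path w d' \<sigma>"
  have prefixes: "\<forall>i<length \<sigma>. internal_node w d' (take i \<sigma>)" and leaf: "\<not> internal_node w d' \<sigma>"
    using path by (auto simp: is_path_def)
  have "length \<sigma> \<le> d'" using is_path_length_le[OF path] .
  obtain ys where "is_path w d (\<sigma> @ ys)"
  proof (cases "length (filter id \<sigma>) < w")
    case True
    define \<tau> where "\<tau> = \<sigma> @ replicate (d - length \<sigma>) False"
    have "length \<sigma> = d'" using True leaf \<open>length \<sigma> \<le> d'\<close> by (auto simp: internal_node_def)
    moreover have "length (filter id (take i \<tau>)) < w" for i
      using length_filter_take_le[of id i \<tau>] True by (simp add: \<tau>_def)
    ultimately have "is_path w d \<tau>"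
      using assms(2) by (auto simp: is_path_def internal_node_def \<tau>_def)
    then show ?thesis using that \<tau>_def by blast
  next
    case False
    then have "is_path w d \<sigma>"
      using prefixes assms(2) by (auto simp: is_path_def internal_node_def)
    then show ?thesis using that[of "[]"] by simp
  qed
  then obtain h where "h \<in> H" and h: "\<forall>i<length (\<sigma> @ ys). h (X (take i (\<sigma> @ ys))) = (\<sigma> @ ys) ! i"
    using shattered by (auto simp: AL_shattered_def)
  have "h (X (take i \<sigma>)) = \<sigma> ! i" if "i < length \<sigma>" for i
    using h[rule_format, of i] that by (simp add: nth_append)
  with \<open>h \<in> H\<close> show "\<exists>h\<in>H. \<forall>i<length \<sigma>. h (X (take i \<sigma>)) = \<sigma> ! i"
    by blast
qed

lemma AL_shattered_depth_0: "V \<noteq> {} \<Longrightarrow> AL_shattered V w 0 X"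
  unfolding AL_shattered_def is_path_def internal_node_def by auto

lemma AL_shattered_nonempty:
  assumes "AL_shattered V w d X"
  shows "V \<noteq> {}"
proof -
  have "is_path w 0 []" by (simp add: is_path_def internal_node_def)
  then show ?thesis
    using AL_shattered_depth_mono[OF assms, of 0] unfolding AL_shattered_def by blast
qed

lemma AL_shattered_width_0: "V \<noteq> {} \<Longrightarrow> AL_shattered V 0 d X"
  unfolding AL_shattered_def is_path_def internal_node_def
  by (auto simp: neq_Nil_conv)

lemma AL_dim_mono: "V \<subseteq> V' \<Longrightarrow> AL_dim w V \<le> AL_dim w V'"
  unfolding AL_dim_def by (rule Sup_subset_mono) (use AL_shattered_class_mono in blast)

lemma AL_shattered_imp_le_AL_dim: "AL_shattered V w d X \<Longrightarrow> enat d \<le> AL_dim w V"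
  unfolding AL_dim_def by (rule Sup_upper) blast

lemma AL_shattered_if_le_AL_dim:
  assumes "V \<noteq> {}" "enat d \<le> AL_dim w V"
  shows "\<exists>X. AL_shattered V w d X"
proof (rule ccontr)
  assume none: "\<nexists>X. AL_shattered V w d X"
  then have "d \<noteq> 0" using AL_shattered_depth_0[OF assms(1)] by (cases d) auto
  have "\<forall>d'. (\<exists>X. AL_shattered V w d' X) \<longrightarrow> d' < d"
    using none AL_shattered_depth_mono by (meson not_le)
  then have "AL_dim w V \<le> enat (d - 1)"
    unfolding AL_dim_def by (intro Sup_least) auto
  with assms(2) \<open>d \<noteq> 0\<close> show False
    by (metis order_trans enat_ord_simps(1) diff_less less_numeral_extra(1) not_le bot_nat_0.not_eq_extremum)
qed

lemma AL_dim_infinite_nonempty: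
  assumes "AL_dim w V = \<infinity>"
  shows "V \<noteq> {}"
proof -
  have "{enat d | d. \<exists>X. AL_shattered V w d X} \<noteq> {}"
    using assms unfolding AL_dim_def by (metis Sup_empty bot_enat_def infinity_ne_i0)
  then show ?thesis using AL_shattered_nonempty by blast
qed

lemma AL_shattered_if_AL_dim_infinite:
  assumes "AL_dim w V = \<infinity>"
  shows "\<exists>X. AL_shattered V w d X"
  using AL_shattered_if_le_AL_dim[OF AL_dim_infinite_nonempty[OF assms]] assms by simp

lemma AL_dim_le_enat:
  assumes "V' \<subseteq> V" "AL_dim w V = enat m"
  obtains m' where "AL_dim w V' = enat m'" "m' \<le> m"
  using AL_dim_mono[OF assms(1), of w] assms(2) enat_ile by fastforce

definition join_trees :: "'x \<Rightarrow> (bool list \<Rightarrow> 'x) \<Rightarrow> (bool list \<Rightarrow> 'x) \<Rightarrow> bool list \<Rightarrow> 'x" where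
  "join_trees x X0 X1 s = (case s of [] \<Rightarrow> x | b # s' \<Rightarrow> if b then X1 s' else X0 s')"

lemma is_path_Cons:
  assumes "1 \<le> w"
  shows "is_path w (Suc d) (b # \<sigma>) \<longleftrightarrow> is_path (if b then w - 1 else w) d \<sigma>"
  using assms
  by (auto simp: is_path_def internal_node_def All_less_Suc2)

lemma AL_shattered_join:
  assumes "1 \<le> w" "AL_shattered {h \<in> V. \<not> h x} w d X0" "AL_shattered {h \<in> V. h x} (w - 1) d X1"
  shows "AL_shattered V w (Suc d) (join_trees x X0 X1)"
  unfolding AL_shattered_def
proof (intro allI impI)
  fix \<sigma> assume path: "is_path w (Suc d) \<sigma>"
  obtain b \<sigma>' where \<sigma>: "\<sigma> = b # \<sigma>'"
    using path assms(1) by (cases \<sigma>) (auto simp: is_path_def internal_node_def)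
  have "is_path (if b then w - 1 else w) d \<sigma>'"
    using path is_path_Cons[OF assms(1)] \<sigma> by simp
  then obtain h where h: "h \<in> V" "h x = b"
    and below: "\<forall>i<length \<sigma>'. h ((if b then X1 else X0) (take i \<sigma>')) = \<sigma>' ! i"
    using assms(2,3) by (cases b) (auto simp: AL_shattered_def)
  have "\<forall>i<length \<sigma>. h (join_trees x X0 X1 (take i \<sigma>)) = \<sigma> ! i"
    using h below by (cases b) (simp_all add: \<sigma> All_less_Suc2 join_trees_def)
  then show "\<exists>h\<in>V. \<forall>i<length \<sigma>. h (join_trees x X0 X1 (take i \<sigma>)) = \<sigma> ! i"
    using h(1) by blast
qed

text \<open>Otherwise the two shattered trees of depth m would join below x into one of depth m + 1.\<close>

lemma AL_dim_split:
  assumes "1 \<le> u" "AL_dim u V = enat m"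
    and zero_side: "{h \<in> V. \<not> h x} \<noteq> {}" "AL_dim u V \<le> AL_dim u {h \<in> V. \<not> h x}"
    and one_side: "{h \<in> V. h x} \<noteq> {}"
  shows "2 \<le> u \<and> AL_dim (u - 1) {h \<in> V. h x} < enat m"
proof (rule ccontr)
  assume contra: "\<not> ?thesis"
  obtain X0 where X0: "AL_shattered {h \<in> V. \<not> h x} u m X0"
    using AL_shattered_if_le_AL_dim[OF zero_side(1)] zero_side(2) assms(2) by auto
  obtain X1 where X1: "AL_shattered {h \<in> V. h x} (u - 1) m X1"
  proof (cases "2 \<le> u")
    case True
    with contra have "enat m \<le> AL_dim (u - 1) {h \<in> V. h x}" by (simp add: not_less)
    then show ?thesis using that AL_shattered_if_le_AL_dim[OF one_side] by blast
  next
    case False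
    then have "u - 1 = 0" by simp
    then show ?thesis using that AL_shattered_width_0[OF one_side] by metis
  qed
  have "enat (Suc m) \<le> AL_dim u V"
    using AL_shattered_imp_le_AL_dim[OF AL_shattered_join[OF assms(1) X0 X1]] .
  then show False using assms(2) by simp
qed

section \<open>The upper bound\<close>

definition zero_label_lowers_dim :: "('x \<Rightarrow> bool) set \<Rightarrow> nat \<Rightarrow> 'x \<Rightarrow> bool" where
  "zero_label_lowers_dim V u x \<longleftrightarrow>
     {h \<in> V. \<not> h x} = {} \<or> AL_dim u {h \<in> V. \<not> h x} < AL_dim u V"

text \<open>The state of the learner is the version space V together with a width budget u.\<close>

fun update_state ::
  "('x \<Rightarrow> bool) set \<times> nat \<Rightarrow> 'x \<times> bool \<times> bool option \<Rightarrow> ('x \<Rightarrow> bool) set \<times> nat" where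
  "update_state (V, u) (x, True, Some y) =
     ({h \<in> V. h x = y}, if y \<and> \<not> zero_label_lowers_dim V u x then u - 1 else u)"
| "update_state s _ = s"

definition learner_state :: "('x \<Rightarrow> bool) set \<Rightarrow> nat \<Rightarrow> 'x hist \<Rightarrow> ('x \<Rightarrow> bool) set \<times> nat" where
  "learner_state H w hs = foldl update_state (H, w) hs"

definition width_learner :: "('x \<Rightarrow> bool) set \<Rightarrow> nat \<Rightarrow> real \<Rightarrow> 'x learner" where
  "width_learner H w p hs x =
     (case learner_state H w hs of (V, u) \<Rightarrow> if zero_label_lowers_dim V u x then 1 else p)"

definition width_potential :: "real \<Rightarrow> nat \<Rightarrow> nat \<Rightarrow> nat \<Rightarrow> real" where
  "width_potential p u m n = real (u - 1) / p + real m + p * real n"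

lemma valid_width_learner: "0 \<le> p \<Longrightarrow> p \<le> 1 \<Longrightarrow> valid_learner (width_learner H w p)"
  unfolding valid_learner_def width_learner_def by (auto split: prod.splits)

lemma learner_state_snoc: "learner_state H w (hs @ [e]) = update_state (learner_state H w hs) e"
  by (simp add: learner_state_def)

lemma AL_dim_zero_label_lowers:
  assumes "zero_label_lowers_dim V u x" "h \<in> V" "AL_dim u V = enat m"
  obtains m' where "AL_dim u {g \<in> V. g x = h x} = enat m'" "m' + (if h x then 0 else 1) \<le> m"
proof (cases "h x")
  case True
  obtain m' where "AL_dim u {g \<in> V. g x = h x} = enat m'" "m' \<le> m"
    using AL_dim_le_enat[of "{g \<in> V. g x = h x}" V u m] assms(3) by blast
  then show ?thesis using that True by simp
next
  case False
  then have "AL_dim u {g \<in> V. g x = h x} < enat m"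
    using assms by (auto simp: zero_label_lowers_dim_def)
  then obtain m' where "AL_dim u {g \<in> V. g x = h x} = enat m'" "m' < m"
    using less_enatE by blast
  then show ?thesis using that False by simp
qed

lemma update_state_accept:
  assumes "h \<in> V" "1 \<le> u" "AL_dim u V = enat m"
  obtains u' m' where "update_state (V, u) (x, True, Some (h x)) = ({g \<in> V. g x = h x}, u')"
    and "1 \<le> u'" and "AL_dim u' {g \<in> V. g x = h x} = enat m'"
    and "zero_label_lowers_dim V u x \<Longrightarrow> u' = u \<and> m' + (if h x then 0 else 1) \<le> m"
    and "\<not> zero_label_lowers_dim V u x \<Longrightarrow> \<not> h x \<Longrightarrow> u' = u \<and> m' \<le> m"
    and "\<not> zero_label_lowers_dim V u x \<Longrightarrow> h x \<Longrightarrow> u' + 1 = u \<and> m' < m"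
proof (cases "zero_label_lowers_dim V u x")
  case lowers: True
  obtain m' where "AL_dim u {g \<in> V. g x = h x} = enat m'" "m' + (if h x then 0 else 1) \<le> m"
    using AL_dim_zero_label_lowers[OF lowers assms(1,3)] by blast
  with lowers show ?thesis using assms(2) by (intro that[of u m']) auto
next
  case keeps: False
  show ?thesis
  proof (cases "h x")
    case True
    have "2 \<le> u \<and> AL_dim (u - 1) {g \<in> V. g x} < enat m"
      using keeps assms True
      by (intro AL_dim_split) (auto simp: zero_label_lowers_dim_def not_less)
    then obtain m' where "AL_dim (u - 1) {g \<in> V. g x} = enat m'" "m' < m" "2 \<le> u"
      using less_enatE by blast
    with keeps True show ?thesis by (intro that[of "u - 1" m']) auto
  next
    case False
    obtain m' where "AL_dim u {g \<in> V. g x = h x} = enat m'" "m' \<le> m"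
      using AL_dim_le_enat[of "{g \<in> V. g x = h x}" V u m] assms(3) by blast
    with keeps False assms(2) show ?thesis by (intro that[of u m']) auto
  qed
qed

lemma width_potential_Suc: "width_potential p u m (Suc n) = width_potential p u m n + p"
  by (simp add: width_potential_def algebra_simps)

text \<open>After a randomized prediction on an instance labelled 1, the false negative
  (probability 1 - p) is paid by the budget drop in the complementary event (probability p),
  which lowers the potential by 1/p + 1.\<close>

lemma width_potential_round:
  assumes p: "0 < p" "p \<le> 1" and "1 \<le> u'"
    and "a = (if lowers then 1 else p)"
    and "lowers \<Longrightarrow> u' = u \<and> m' + (if y then 0 else 1) \<le> m"
    and "\<not> lowers \<Longrightarrow> \<not> y \<Longrightarrow> u' = u \<and> m' \<le> m"
    and "\<not> lowers \<Longrightarrow> y \<Longrightarrow> u' + 1 = u \<and> m' < m"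
  shows "a * ((if y then 0 else 1) + width_potential p u' m' n)
           + (1 - a) * ((if y then 1 else 0) + width_potential p u m n)
         \<le> width_potential p u m (Suc n)"
proof -
  let ?\<Phi> = "width_potential p u m n" and ?\<Phi>' = "width_potential p u' m' n"
  consider "lowers" | "\<not> lowers" "\<not> y" | "\<not> lowers" "y" by blast
  then show ?thesis
  proof cases
    case 1
    then have "(if y then 0 else 1) + ?\<Phi>' \<le> ?\<Phi>"
      using assms(5) by (cases y) (auto simp: width_potential_def)
    then show ?thesis using 1 assms(4) p by (simp add: width_potential_Suc)
  next
    case 2
    then have "?\<Phi>' \<le> ?\<Phi>" using assms(6) by (simp add: width_potential_def)
    then have "p * (1 + ?\<Phi>') + (1 - p) * ?\<Phi> \<le> p * (1 + ?\<Phi>) + (1 - p) * ?\<Phi>"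
      using p by (simp add: mult_left_mono)
    then show ?thesis using 2 assms(4) by (simp add: width_potential_Suc algebra_simps)
  next
    case 3
    then have "real (u' - 1) = real (u - 1) - 1" "real m' \<le> real m - 1"
      using assms(3,7) by auto
    then have "?\<Phi>' \<le> ?\<Phi> - 1 / p - 1"
      using p by (simp add: width_potential_def diff_divide_distrib)
    then have "p * ?\<Phi>' \<le> p * ?\<Phi> - 1 - p"
      using p mult_left_mono[of ?\<Phi>' "?\<Phi> - 1 / p - 1" p] by (simp add: algebra_simps)
    then show ?thesis using 3 assms(4) p by (simp add: width_potential_Suc algebra_simps)
  qed
qed

lemma width_learner_exp_mistakes:
  assumes p: "0 < p" "p \<le> 1"
  shows "learner_state H w hs = (V, u) \<Longrightarrow> h \<in> V \<Longrightarrow> 1 \<le> u \<Longrightarrow> AL_dim u V = enat m \<Longrightarrow>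
    exp_mistakes (width_learner H w p) h hs xs \<le> width_potential p u m (length xs)"
proof (induction xs arbitrary: hs V u m)
  case Nil
  then show ?case using p by (simp add: width_potential_def)
next
  case (Cons x xs)
  let ?A = "width_learner H w p"
  let ?hs1 = "hs @ [(x, True, Some (h x))]" and ?hs0 = "hs @ [(x, False, None)]"
  obtain u' m' where next_state: "update_state (V, u) (x, True, Some (h x)) = ({g \<in> V. g x = h x}, u')"
    and u': "1 \<le> u'" and dim1: "AL_dim u' {g \<in> V. g x = h x} = enat m'"
    and transition: "zero_label_lowers_dim V u x \<Longrightarrow> u' = u \<and> m' + (if h x then 0 else 1) \<le> m"
      "\<not> zero_label_lowers_dim V u x \<Longrightarrow> \<not> h x \<Longrightarrow> u' = u \<and> m' \<le> m"
      "\<not> zero_label_lowers_dim V u x \<Longrightarrow> h x \<Longrightarrow> u' + 1 = u \<and> m' < m"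
    using update_state_accept[OF Cons.prems(2-4), of x] by blast
  have state1: "learner_state H w ?hs1 = ({g \<in> V. g x = h x}, u')"
    using next_state Cons.prems(1) by (simp add: learner_state_snoc)
  have E1: "exp_mistakes ?A h ?hs1 xs \<le> width_potential p u' m' (length xs)"
    using Cons.IH[OF state1 _ u' dim1] Cons.prems(2) by simp
  have E0: "exp_mistakes ?A h ?hs0 xs \<le> width_potential p u m (length xs)"
    using Cons.IH Cons.prems by (simp add: learner_state_snoc)
  have "exp_mistakes ?A h hs (x # xs)
      \<le> ?A hs x * ((if h x then 0 else 1) + width_potential p u' m' (length xs))
        + (1 - ?A hs x) * ((if h x then 1 else 0) + width_potential p u m (length xs))"
    using E0 E1 valid_learnerD[OF valid_width_learner, of p H w hs x] p
    by (simp add: add_mono mult_left_mono)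
  also have "\<dots> \<le> width_potential p u m (length (x # xs))"
    using width_potential_round[OF p u' _ transition] Cons.prems(1) by (simp add: width_learner_def)
  finally show ?case .
qed

lemma opt_mistakes_le_width_potential:
  assumes "H \<noteq> {}" "1 \<le> w" "AL_dim w H = enat d" "0 < p" "p \<le> 1"
  shows "opt_mistakes T H \<le> real (w - 1) / p + real d + p * real T"
proof -
  have valid: "valid_learner (width_learner H w p)"
    using assms by (intro valid_width_learner) auto
  have "mistake_bound (width_learner H w p) T H \<le> width_potential p w d T"
    using width_learner_exp_mistakes[OF assms(4,5), of H w "[]" H w h d for h] assms
    by (intro mistake_bound_le) (auto simp: learner_state_def)
  then show ?thesis
    using order_trans[OF opt_mistakes_le_mistake_bound[OF valid assms(1)]]
    by (simp add: width_potential_def)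
qed

section \<open>Lower bound from complete binary trees\<close>

fun branch_instances :: "(bool list \<Rightarrow> 'x) \<Rightarrow> bool list \<Rightarrow> bool list \<Rightarrow> 'x list" where
  "branch_instances X u [] = []"
| "branch_instances X u (b # s) = X u # branch_instances X (u @ [b]) s"

lemma length_branch_instances [simp]: "length (branch_instances X u s) = length s"
  by (induction s arbitrary: u) auto

lemma sum_lists_length_Suc:
  fixes f :: "bool list \<Rightarrow> real"
  shows "(\<Sum>s | length s = Suc n. f s) = (\<Sum>s | length s = n. f (True # s)) + (\<Sum>s | length s = n. f (False # s))"
proof -
  have split: "{s :: bool list. length s = Suc n} = Cons True ` {s. length s = n} \<union> Cons False ` {s. length s = n}"
    by (auto simp: length_Suc_conv image_iff)
  have "finite {s :: bool list. length s = n}"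
    using finite_lists_length_eq[of "UNIV :: bool set" n] by simp
  then show ?thesis
    unfolding split by (subst sum.union_disjoint) (auto simp: sum.reindex)
qed

lemma card_lists_length_bool: "card {s :: bool list. length s = n} = 2 ^ n"
  using card_lists_length_eq[of "UNIV :: bool set" n] by simp

text \<open>Averaged over all branches of a complete binary tree, with a target realizing the
  branch, every round costs 1/2: whatever the learner predicts, half of the targets disagree.\<close>

lemma sum_exp_mistakes_branches:
  assumes A: "valid_learner A"
    and labels: "\<And>s i. length s = n \<Longrightarrow> i < n \<Longrightarrow> g s (X (u @ take i s)) = s ! i"
  shows "2 ^ n * real n / 2 \<le> (\<Sum>s | length s = n. exp_mistakes A (g s) hs (branch_instances X u s))"
  using labels
proof (induction n arbitrary: u hs g)
  case 0
  then show ?case using exp_mistakes_nonneg[OF A] by (simp add: sum_nonneg)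
next
  case (Suc n)
  let ?a = "A hs (X u)" and ?L = "2 ^ n * real n / 2 :: real"
  have branch: "?a * ((if b then 0 else 2 ^ n) + ?L) + (1 - ?a) * ((if b then 2 ^ n else 0) + ?L)
      \<le> (\<Sum>s | length s = n. exp_mistakes A (g (b # s)) hs (branch_instances X u (b # s)))" for b
  proof -
    define E where "E e s = exp_mistakes A (g (b # s)) (hs @ [e]) (branch_instances X (u @ [b]) s)"
      for e s
    have root: "g (b # s) (X u) = b" if "length s = n" for s
      using Suc.prems[of "b # s" 0] that by simp
    have IH: "?L \<le> (\<Sum>s | length s = n. E e s)" for e
      unfolding E_def by (rule Suc.IH) (use Suc.prems[of "b # _" "Suc _"] in simp)
    have "(\<Sum>s | length s = n. exp_mistakes A (g (b # s)) hs (branch_instances X u (b # s)))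
        = (\<Sum>s | length s = n. ?a * ((if b then 0 else 1) + E (X u, True, Some b) s)
                                + (1 - ?a) * ((if b then 1 else 0) + E (X u, False, None) s))"
      by (rule sum.cong) (simp_all add: root E_def)
    also have "\<dots> = ?a * ((if b then 0 else 2 ^ n) + (\<Sum>s | length s = n. E (X u, True, Some b) s))
        + (1 - ?a) * ((if b then 2 ^ n else 0) + (\<Sum>s | length s = n. E (X u, False, None) s))"
      by (simp add: sum.distrib card_lists_length_bool flip: sum_distrib_left)
    finally show ?thesis
      using IH valid_learnerD[OF A, of hs "X u"] by (simp add: add_mono mult_left_mono)
  qed
  have "2 ^ Suc n * real (Suc n) / 2
      = ?a * (0 + ?L) + (1 - ?a) * (2 ^ n + ?L) + (?a * (2 ^ n + ?L) + (1 - ?a) * (0 + ?L))"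
    by (simp add: algebra_simps)
  also have "\<dots> \<le> (\<Sum>s | length s = Suc n. exp_mistakes A (g s) hs (branch_instances X u s))"
    unfolding sum_lists_length_Suc using branch[of True] branch[of False] by simp
  finally show ?case .
qed

lemma mistake_bound_ge_half_horizon:
  assumes A: "valid_learner A"
    and shattered: "\<And>s. length s = T \<Longrightarrow> \<exists>h\<in>H. \<forall>i<T. h (X (take i s)) = s ! i"
  shows "real T / 2 \<le> mistake_bound A T H"
proof -
  obtain g where g: "\<And>s. length s = T \<Longrightarrow> g s \<in> H \<and> (\<forall>i<T. g s (X (take i s)) = s ! i)"
    using shattered by metis
  have "2 ^ T * real T / 2 \<le> (\<Sum>s | length s = T. exp_mistakes A (g s) [] (branch_instances X [] s))"
    using g by (intro sum_exp_mistakes_branches[OF A]) auto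
  also have "\<dots> \<le> (\<Sum>s :: bool list | length s = T. mistake_bound A T H)"
  proof (rule sum_mono)
    fix s :: "bool list" assume "s \<in> {s. length s = T}"
    then show "exp_mistakes A (g s) [] (branch_instances X [] s) \<le> mistake_bound A T H"
      using g[of s] by (intro exp_mistakes_le_mistake_bound[OF A]) auto
  qed
  also have "\<dots> = 2 ^ T * mistake_bound A T H"
    by (simp add: card_lists_length_bool)
  finally show ?thesis by simp
qed

text \<open>A tree of width T + 1 and depth T is a complete binary tree.\<close>

lemma opt_mistakes_ge_half_horizon:
  assumes "AL_dim (Suc T) H = \<infinity>"
  shows "real T / 2 \<le> opt_mistakes T H"
proof (rule le_opt_mistakes)
  fix A :: "'a learner" assume A: "valid_learner A"
  obtain X where X: "AL_shattered H (Suc T) T X"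
    using AL_shattered_if_AL_dim_infinite[OF assms] by blast
  have path: "is_path (Suc T) T s" if "length s = T" for s :: "bool list"
  proof -
    have "length (filter id (take i s)) \<le> T" for i
      using length_filter_le[of id "take i s"] that by simp
    then show ?thesis using that by (auto simp: is_path_def internal_node_def le_imp_less_Suc)
  qed
  have "\<exists>h\<in>H. \<forall>i<T. h (X (take i s)) = s ! i" if "length s = T" for s
    using X path[OF that] that unfolding AL_shattered_def by auto
  then show "real T / 2 \<le> mistake_bound A T H"
    by (rule mistake_bound_ge_half_horizon[OF A])
qed

section \<open>Lower bound from chains\<close>

definition label_chain :: "(nat \<Rightarrow> 'x \<Rightarrow> bool) \<Rightarrow> (nat \<Rightarrow> 'x) \<Rightarrow> nat \<Rightarrow> bool" where
  "label_chain f y d \<longleftrightarrow> (\<forall>k i. k \<le> d \<longrightarrow> i \<le> k \<longrightarrow> i < d \<longrightarrow> f k (y i) = (i = k))"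

text \<open>A width-1 tree of depth d has only the paths 0^k 1 (k < d) and 0^d, so shattering it
  amounts to a label chain along y i = X (0^i).\<close>

lemma is_path_width_1: "k \<le> d \<Longrightarrow> is_path 1 d (take d (replicate k False @ [True]))"
  by (cases "k < d") (auto simp: is_path_def internal_node_def min_def take_append)

lemma AL_shattered_width_1_label_chain:
  assumes "AL_shattered H 1 d X"
  obtains f where "\<And>k. k \<le> d \<Longrightarrow> f k \<in> H" and "label_chain f (\<lambda>i. X (replicate i False)) d"
proof -
  define \<sigma> where "\<sigma> k = take d (replicate k False @ [True])" for k
  have "\<exists>h\<in>H. \<forall>i<length (\<sigma> k). h (X (take i (\<sigma> k))) = \<sigma> k ! i" if "k \<le> d" for k
    using assms is_path_width_1[OF that] unfolding AL_shattered_def \<sigma>_def by blast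
  then obtain f where f: "\<And>k. k \<le> d \<Longrightarrow> f k \<in> H \<and> (\<forall>i<length (\<sigma> k). f k (X (take i (\<sigma> k))) = \<sigma> k ! i)"
    by metis
  have \<sigma>: "i < length (\<sigma> k)" "take i (\<sigma> k) = replicate i False" "\<sigma> k ! i = (i = k)"
    if "i \<le> k" "i < d" for k i
    using that by (auto simp: \<sigma>_def nth_append take_append)
  have "label_chain f (\<lambda>i. X (replicate i False)) d"
    unfolding label_chain_def using f \<sigma> by metis
  with f show ?thesis using that by blast
qed

definition chain_blocks :: "(nat \<Rightarrow> 'x) \<Rightarrow> nat \<Rightarrow> nat \<Rightarrow> nat \<Rightarrow> 'x list" where
  "chain_blocks y n j d = concat (map (\<lambda>i. replicate n (y i)) [j..<d])"

lemma chain_blocks_Cons: "j < d \<Longrightarrow> chain_blocks y n j d = replicate n (y j) @ chain_blocks y n (Suc j) d"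
  by (simp add: chain_blocks_def upt_conv_Cons)

lemma length_chain_blocks: "length (chain_blocks y n j d) = (d - j) * n"
  by (simp add: chain_blocks_def length_concat o_def sum_list_triv)

definition weighted_exp_mistakes ::
  "'x learner \<Rightarrow> (nat \<Rightarrow> 'x \<Rightarrow> bool) \<Rightarrow> (nat \<Rightarrow> real) \<Rightarrow> nat set \<Rightarrow> 'x hist \<Rightarrow> 'x list \<Rightarrow> real"
where
  "weighted_exp_mistakes A f c K hs xs = (\<Sum>k\<in>K. c k * exp_mistakes A (f k) hs xs)"

lemma weighted_exp_mistakes_Cons_negative:
  assumes "\<And>k. k \<in> K \<Longrightarrow> \<not> f k y"
  shows "weighted_exp_mistakes A f c K hs (y # xs) =
    A hs y * (sum c K + weighted_exp_mistakes A f c K (hs @ [(y, True, Some False)]) xs)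
    + (1 - A hs y) * weighted_exp_mistakes A f c K (hs @ [(y, False, None)]) xs"
proof -
  have "weighted_exp_mistakes A f c K hs (y # xs) =
    (\<Sum>k\<in>K. A hs y * (c k + c k * exp_mistakes A (f k) (hs @ [(y, True, Some False)]) xs)
      + (1 - A hs y) * (c k * exp_mistakes A (f k) (hs @ [(y, False, None)]) xs))"
    unfolding weighted_exp_mistakes_def by (rule sum.cong) (simp_all add: assms algebra_simps)
  then show ?thesis
    by (simp add: weighted_exp_mistakes_def sum.distrib sum_distrib_left distrib_left)
qed

text \<open>Instances that all targets label by 0 produce the same history for every target,
  so prepending them cannot lower a bound that holds for every history.\<close>

lemma weighted_exp_mistakes_prepend_negative:
  assumes A: "valid_learner A"
    and negative: "\<And>k x. k \<in> K \<Longrightarrow> x \<in> set ys \<Longrightarrow> \<not> f k x"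
    and c: "\<And>k. k \<in> K \<Longrightarrow> 0 \<le> c k"
    and bound: "\<And>hs. B \<le> weighted_exp_mistakes A f c K hs xs"
  shows "B \<le> weighted_exp_mistakes A f c K hs (ys @ xs)"
  using negative
proof (induction ys arbitrary: hs)
  case Nil
  then show ?case using bound by simp
next
  case (Cons y ys)
  have "0 \<le> sum c K" using c by (simp add: sum_nonneg)
  then have "B \<le> A hs y * (sum c K + weighted_exp_mistakes A f c K (hs @ [(y, True, Some False)]) (ys @ xs))
      + (1 - A hs y) * weighted_exp_mistakes A f c K (hs @ [(y, False, None)]) (ys @ xs)"
    using Cons valid_learnerD[OF A, of hs y] by (intro convex_bound_ge) (auto intro: add_increasing)
  then show ?case
    using weighted_exp_mistakes_Cons_negative[of K f y A c hs "ys @ xs"] Cons.prems by simp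
qed

text \<open>The last target f d, which labels every y i by 0, gets weight 1 and all others weight
  1/n. On the block of copies of y j, predicting 1 costs weight at least 1 (the targets f k,
  k > j, label y j by 0), while predicting 0 costs 1/n (through f j). So every block costs 1.\<close>

definition chain_weight :: "nat \<Rightarrow> nat \<Rightarrow> nat \<Rightarrow> real" where
  "chain_weight n d k = (if k = d then 1 else 1 / real n)"

lemma chain_weight_nonneg: "0 \<le> chain_weight n d k"
  by (simp add: chain_weight_def)

lemma sum_chain_weight: "(\<Sum>k\<in>{0..d}. chain_weight n d k) = 1 + real d / real n"
proof -
  have "(\<Sum>k\<in>{0..<d}. chain_weight n d k) = (\<Sum>k\<in>{0..<d}. 1 / real n)"
    by (rule sum.cong) (auto simp: chain_weight_def)
  moreover have "{0..d} = insert d {0..<d}" by auto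
  ultimately show ?thesis by (simp add: chain_weight_def)
qed

lemma weighted_exp_mistakes_chain_head:
  assumes "j < d"
  shows "weighted_exp_mistakes A f (chain_weight n d) {j..d} hs xs
    = exp_mistakes A (f j) hs xs / real n + weighted_exp_mistakes A f (chain_weight n d) {Suc j..d} hs xs"
  using assms by (simp add: weighted_exp_mistakes_def sum.atLeast_Suc_atMost chain_weight_def)

lemma weighted_exp_mistakes_chain_round:
  fixes A :: "'x learner" and n :: nat
  assumes "j < d"
    and chain: "label_chain f y d"
  defines "W \<equiv> weighted_exp_mistakes A f (chain_weight n d) {Suc j..d}"
  shows "weighted_exp_mistakes A f (chain_weight n d) {j..d} hs (y j # xs)
    = A hs (y j) * (exp_mistakes A (f j) (hs @ [(y j, True, Some True)]) xs / real n
                     + sum (chain_weight n d) {Suc j..d} + W (hs @ [(y j, True, Some False)]) xs)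
      + (1 - A hs (y j)) * ((1 + exp_mistakes A (f j) (hs @ [(y j, False, None)]) xs) / real n
                     + W (hs @ [(y j, False, None)]) xs)"
proof -
  have "f j (y j)" using chain \<open>j < d\<close> by (simp add: label_chain_def)
  then have target_j: "exp_mistakes A (f j) hs (y j # xs)
      = A hs (y j) * exp_mistakes A (f j) (hs @ [(y j, True, Some True)]) xs
        + (1 - A hs (y j)) * (1 + exp_mistakes A (f j) (hs @ [(y j, False, None)]) xs)"
    by simp
  have later_targets: "W hs (y j # xs)
      = A hs (y j) * (sum (chain_weight n d) {Suc j..d} + W (hs @ [(y j, True, Some False)]) xs)
        + (1 - A hs (y j)) * W (hs @ [(y j, False, None)]) xs"
    unfolding W_def using chain \<open>j < d\<close>
    by (intro weighted_exp_mistakes_Cons_negative) (auto simp: label_chain_def)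
  show ?thesis
    unfolding weighted_exp_mistakes_chain_head[OF \<open>j < d\<close>] W_def[symmetric] target_j later_targets
    by (simp add: add_divide_distrib ring_distribs)
qed

lemma weighted_exp_mistakes_chain_block:
  assumes A: "valid_learner A" and "1 \<le> n" and "j < d"
    and chain: "label_chain f y d"
    and later: "\<And>hs. real (d - Suc j) \<le> weighted_exp_mistakes A f (chain_weight n d) {Suc j..d} hs xs"
  shows "r \<le> n \<Longrightarrow> real r / real n + real (d - Suc j)
    \<le> weighted_exp_mistakes A f (chain_weight n d) {j..d} hs (replicate r (y j) @ xs)"
proof (induction r arbitrary: hs)
  let ?W = "weighted_exp_mistakes A f (chain_weight n d) {Suc j..d}" and ?D = "real (d - Suc j)"
  {
    case 0
    have "0 \<le> exp_mistakes A (f j) hs xs / real n"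
      using exp_mistakes_nonneg[OF A] by simp
    then show ?case
      using later[of hs] weighted_exp_mistakes_chain_head[OF \<open>j < d\<close>, of A f n hs xs] by simp
  next
    case (Suc r)
    let ?ys = "replicate r (y j) @ xs"
    let ?hs1 = "hs @ [(y j, True, Some False)]" and ?hs0 = "hs @ [(y j, False, None)]"
    have "1 \<le> sum (chain_weight n d) {Suc j..d}"
      using member_le_sum[of d "{Suc j..d}" "chain_weight n d"] chain_weight_nonneg \<open>j < d\<close>
      by (simp add: chain_weight_def)
    moreover have "?D \<le> ?W ?hs1 ?ys"
      using chain \<open>j < d\<close>
      by (intro weighted_exp_mistakes_prepend_negative[OF A _ chain_weight_nonneg later])
        (auto simp: label_chain_def)
    moreover have "real r / real n + ?D \<le> exp_mistakes A (f j) ?hs0 ?ys / real n + ?W ?hs0 ?ys"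
      using Suc.IH[of ?hs0] Suc.prems weighted_exp_mistakes_chain_head[OF \<open>j < d\<close>, of A f n ?hs0 ?ys]
      by simp
    moreover have "0 \<le> exp_mistakes A (f j) (hs @ [(y j, True, Some True)]) ?ys / real n"
      using exp_mistakes_nonneg[OF A] by simp
    moreover have "real (Suc r) / real n \<le> 1" and "0 < real n"
      using Suc.prems \<open>1 \<le> n\<close> by (auto simp: divide_le_eq)
    ultimately have "real (Suc r) / real n + ?D
      \<le> A hs (y j) * (exp_mistakes A (f j) (hs @ [(y j, True, Some True)]) ?ys / real n
                      + sum (chain_weight n d) {Suc j..d} + ?W ?hs1 ?ys)
        + (1 - A hs (y j)) * ((1 + exp_mistakes A (f j) ?hs0 ?ys) / real n + ?W ?hs0 ?ys)"
      using valid_learnerD[OF A, of hs "y j"]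
      by (intro convex_bound_ge) (auto simp: add_divide_distrib)
    then show ?case
      using weighted_exp_mistakes_chain_round[OF \<open>j < d\<close> chain] by simp
  }
qed

lemma weighted_exp_mistakes_chain_blocks:
  assumes A: "valid_learner A" and "1 \<le> n"
    and chain: "label_chain f y d"
  shows "m \<le> d \<Longrightarrow>
    real m \<le> weighted_exp_mistakes A f (chain_weight n d) {d - m..d} hs (chain_blocks y n (d - m) d)"
proof (induction m arbitrary: hs)
  case 0
  then show ?case by (simp add: chain_blocks_def weighted_exp_mistakes_def)
next
  case (Suc m)
  define j where "j = d - Suc m"
  have j: "j < d" "Suc j = d - m" "d - Suc j = m"
    using Suc.prems by (auto simp: j_def)
  have "real n / real n + real (d - Suc j) \<le> weighted_exp_mistakes A f (chain_weight n d) {j..d} hs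
      (replicate n (y j) @ chain_blocks y n (Suc j) d)"
    using Suc.IH Suc.prems j
    by (intro weighted_exp_mistakes_chain_block[OF A \<open>1 \<le> n\<close> j(1) chain]) auto
  then show ?case
    using \<open>1 \<le> n\<close> j chain_blocks_Cons[OF j(1), of y n] by (simp add: j_def)
qed

lemma mistake_bound_ge_chain:
  assumes A: "valid_learner A" and "1 \<le> n" and "d * n \<le> T"
    and chain: "label_chain f y d"
    and targets: "\<And>k. k \<le> d \<Longrightarrow> f k \<in> H"
  shows "real d \<le> (1 + real d / real n) * mistake_bound A T H"
proof -
  define xs where "xs = chain_blocks y n 0 d @ replicate (T - d * n) (y 0)"
  have "length xs = T"
    using \<open>d * n \<le> T\<close> by (simp add: xs_def length_chain_blocks)
  have "real d \<le> weighted_exp_mistakes A f (chain_weight n d) {0..d} [] (chain_blocks y n 0 d)"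
    using weighted_exp_mistakes_chain_blocks[OF A \<open>1 \<le> n\<close> chain, of d "[]"] by simp
  also have "\<dots> \<le> (\<Sum>k\<in>{0..d}. chain_weight n d k * mistake_bound A T H)"
    unfolding weighted_exp_mistakes_def
  proof (intro sum_mono mult_left_mono chain_weight_nonneg)
    fix k assume "k \<in> {0..d}"
    have "exp_mistakes A (f k) [] (chain_blocks y n 0 d) \<le> exp_mistakes A (f k) [] xs"
      unfolding xs_def by (rule exp_mistakes_append_mono[OF A])
    also have "\<dots> \<le> mistake_bound A T H"
      using targets \<open>k \<in> {0..d}\<close> \<open>length xs = T\<close> by (intro exp_mistakes_le_mistake_bound[OF A]) auto
    finally show "exp_mistakes A (f k) [] (chain_blocks y n 0 d) \<le> mistake_bound A T H" .
  qed
  also have "\<dots> = (1 + real d / real n) * mistake_bound A T H"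
    by (simp add: sum_distrib_right[symmetric] sum_chain_weight)
  finally show ?thesis .
qed

lemma opt_mistakes_ge_sqrt:
  assumes "AL_dim 1 H = \<infinity>" and "1 \<le> T"
  shows "sqrt (real T) / 4 \<le> opt_mistakes T H"
proof (rule le_opt_mistakes)
  fix A :: "'a learner" assume A: "valid_learner A"
  define d where "d = nat \<lfloor>sqrt (real T)\<rfloor>"
  have "1 \<le> d" using \<open>1 \<le> T\<close> by (simp add: d_def le_nat_floor)
  have "real d \<le> sqrt (real T)" and "sqrt (real T) < real d + 1"
    by (simp_all add: d_def)
  then have "real d * real d \<le> sqrt (real T) * sqrt (real T)"
    by (intro mult_mono) auto
  then have "d * d \<le> T"
    by (simp flip: of_nat_mult)
  have sqrt_le: "sqrt (real T) \<le> 2 * real d"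
    using \<open>sqrt (real T) < real d + 1\<close> \<open>1 \<le> d\<close> by linarith
  obtain X where "AL_shattered H 1 d X"
    using AL_shattered_if_AL_dim_infinite[OF assms(1)] by blast
  then obtain f where targets: "\<And>k. k \<le> d \<Longrightarrow> f k \<in> H"
    and chain: "label_chain f (\<lambda>i. X (replicate i False)) d"
    using AL_shattered_width_1_label_chain by blast
  have "real d \<le> (1 + real d / real d) * mistake_bound A T H"
    using \<open>d * d \<le> T\<close> \<open>1 \<le> d\<close> by (intro mistake_bound_ge_chain[OF A _ _ chain targets]) auto
  then show "sqrt (real T) / 4 \<le> mistake_bound A T H"
    using \<open>1 \<le> d\<close> sqrt_le by simp
qed

lemma eff_width_enatD:
  assumes "eff_width H = enat w"
  shows "1 \<le> w \<and> AL_dim w H < \<infinity>"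
proof -
  let ?S = "{enat w | w. 1 \<le> w \<and> AL_dim w H < \<infinity>}"
  have "?S \<noteq> {}"
  proof
    assume "?S = {}"
    then have "eff_width H = \<infinity>" unfolding eff_width_def by (metis Inf_empty top_enat_def)
    with assms show False by simp
  qed
  then obtain k where "k \<in> ?S" by blast
  then have "Inf ?S \<in> ?S" by (rule wellorder_InfI)
  then show ?thesis using assms unfolding eff_width_def by auto
qed

lemma eff_width_le: "1 \<le> w \<Longrightarrow> AL_dim w H < \<infinity> \<Longrightarrow> eff_width H \<le> enat w"
  unfolding eff_width_def by (rule Inf_lower) blast

lemma opt_mistakes_le_AL_dim_1:
  assumes "H \<noteq> {}" "AL_dim 1 H = enat d"
  shows "opt_mistakes T H \<le> real d + 1"
proof -
  define p where "p = 1 / (real T + 1)"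
  have "0 < p" "p \<le> 1" "p * real T \<le> 1" by (auto simp: p_def)
  then show ?thesis
    using opt_mistakes_le_width_potential[OF assms(1) _ assms(2), of p T] by simp
qed

lemma opt_mistakes_le_sqrt:
  assumes "H \<noteq> {}" "1 \<le> w" "AL_dim w H = enat d" "1 \<le> T"
  shows "opt_mistakes T H \<le> (real w + real d) * sqrt (real T)"
proof -
  define s where "s = sqrt (real T)"
  have "1 \<le> s" using assms(4) by (simp add: s_def)
  have "opt_mistakes T H \<le> real (w - 1) / (1 / s) + real d + 1 / s * real T"
    using \<open>1 \<le> s\<close> by (intro opt_mistakes_le_width_potential[OF assms(1-3)]) auto
  also have "\<dots> = (real w - 1) * s + real d + s"
    using \<open>1 \<le> s\<close> assms(2) by (simp add: s_def of_nat_diff real_div_sqrt)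
  also have "\<dots> \<le> (real w + real d) * s"
    using \<open>1 \<le> s\<close> by (simp add: algebra_simps mult_le_cancel_right1)
  finally show ?thesis by (simp add: s_def)
qed

lemma opt_mistakes_bigo_1:
  assumes "eff_width H = 1"
  shows "(\<lambda>T. opt_mistakes T H) \<in> O(\<lambda>T. 1)"
proof -
  obtain C where "\<And>T. \<bar>opt_mistakes T H\<bar> \<le> C"
  proof (cases "H = {}")
    case True
    have const: "opt_mistakes T H = opt_mistakes 0 H" for T
      unfolding True by (rule opt_mistakes_empty)
    show ?thesis by (rule that[of "\<bar>opt_mistakes 0 H\<bar>"]) (metis const order_refl)
  next
    case False
    obtain d where "AL_dim 1 H = enat d"
      using eff_width_enatD[of H 1] assms by (auto simp: one_enat_def)
    then have "\<bar>opt_mistakes T H\<bar> \<le> real d + 1" for T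
      using opt_mistakes_le_AL_dim_1[OF False] opt_mistakes_nonneg[OF False] by simp
    then show ?thesis by (rule that)
  qed
  then show ?thesis by (intro bigoI[where c = C] always_eventually allI) simp
qed

lemma opt_mistakes_bigtheta_sqrt:
  assumes "2 \<le> eff_width H" "eff_width H < \<infinity>"
  shows "(\<lambda>T. opt_mistakes T H) \<in> \<Theta>(\<lambda>T. sqrt (real T))"
proof -
  obtain w where "eff_width H = enat w" using assms(2) by (cases "eff_width H") auto
  then have "1 \<le> w" "AL_dim w H < \<infinity>" using eff_width_enatD by auto
  then obtain d where "AL_dim w H = enat d" by (cases "AL_dim w H") auto
  have "AL_dim 1 H = \<infinity>"
  proof (rule ccontr)
    assume "AL_dim 1 H \<noteq> \<infinity>"
    then have "eff_width H \<le> enat 1" using eff_width_le[of 1 H] by simp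
    with assms(1) have "(2 :: enat) \<le> enat 1" by (rule order_trans)
    then show False by simp
  qed
  then have "H \<noteq> {}" by (rule AL_dim_infinite_nonempty)
  show ?thesis
  proof (rule bigthetaI')
    show "\<forall>\<^sub>F T in at_top. 1 / 4 * norm (sqrt (real T)) \<le> norm (opt_mistakes T H)
        \<and> norm (opt_mistakes T H) \<le> (real w + real d) * norm (sqrt (real T))"
      using opt_mistakes_ge_sqrt[OF \<open>AL_dim 1 H = \<infinity>\<close>] opt_mistakes_nonneg[OF \<open>H \<noteq> {}\<close>]
        opt_mistakes_le_sqrt[OF \<open>H \<noteq> {}\<close> \<open>1 \<le> w\<close> \<open>AL_dim w H = enat d\<close>]
      unfolding eventually_at_top_linorder by (intro exI[of _ 1]) auto
  qed (use \<open>1 \<le> w\<close> in auto)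
qed

lemma opt_mistakes_bigtheta_linear:
  assumes "eff_width H = \<infinity>"
  shows "(\<lambda>T. opt_mistakes T H) \<in> \<Theta>(\<lambda>T. real T)"
proof -
  have infinite: "AL_dim w H = \<infinity>" if "1 \<le> w" for w
    using eff_width_le[OF that, of H] assms by (cases "AL_dim w H") auto
  then have "H \<noteq> {}" using AL_dim_infinite_nonempty by blast
  show ?thesis
  proof (rule bigthetaI'[of "1 / 2" 1])
    show "\<forall>\<^sub>F T in at_top. 1 / 2 * norm (real T) \<le> norm (opt_mistakes T H)
        \<and> norm (opt_mistakes T H) \<le> 1 * norm (real T)"
      using opt_mistakes_ge_half_horizon[OF infinite] opt_mistakes_le_horizon[OF \<open>H \<noteq> {}\<close>]
        opt_mistakes_nonneg[OF \<open>H \<noteq> {}\<close>]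
      by (intro always_eventually allI) auto
  qed auto
qed

theorem corollary1:
  fixes H :: "('x \<Rightarrow> bool) set"
  shows "(eff_width H = 1 \<longrightarrow> (\<lambda>T. opt_mistakes T H) \<in> O(\<lambda>T. 1))
       \<and> (2 \<le> eff_width H \<and> eff_width H < \<infinity> \<longrightarrow>
            (\<lambda>T. opt_mistakes T H) \<in> \<Theta>(\<lambda>T. sqrt (real T)))
       \<and> (eff_width H = \<infinity> \<longrightarrow> (\<lambda>T. opt_mistakes T H) \<in> \<Theta>(\<lambda>T. real T))"
  using opt_mistakes_bigo_1 opt_mistakes_bigtheta_sqrt opt_mistakes_bigtheta_linear by blast

end
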